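(* For all FDSs $A,B$, $\widetilde{A}\,\widetilde{B}=\widetilde{AB}$ (isomorphism of forests).
   Context: A finite dynamical system (FDS) is a function $A:S_A\to S_A$ on a finite set; the product $AB$ acts on $S_A\times S_B$ by $(a,b)\mapsto(A(a),B(b))$. Write $A^{\circ m}$ for the $m$-fold iterate of $A$; a state $s$ is a cycle state if $A^{\circ m}(s)=s$ for some $m>0$. The unrolling $\widetilde{A}$ is the forest with vertex set $\{(s,k)\in S_A\times\mathbb{N}: A^{\circ k}(s)\text{ is a cycle state}\}$ and an arc $(s,k)\to(A(s),k-1)$ for each such vertex with $k\ge1$; the roots are the vertices $(a,0)$. A forest is a disjoint union of rooted in-trees (arcs towards the root); the depth of a vertex is its distance to the root of its tree. The product of forests $\mathbf{F},\mathbf{G}$ has vertex set $\{(x,y):x\in\mathbf{F},y\in\mathbf{G},\operatorname{depth}(x)=\operatorname{depth}(y)\}$ and an arc $(x,y)\to(x',y')$ whenever $x\to x'$ and $y\to y'$ are arcs of $\mathbf{F}$ and $\mathbf{G}$. *)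

theory Defs
  imports Main
begin

text \<open>A finite dynamical system is a function on a finite type (the state set is UNIV).\<close>

definition cycle_state :: "('a \<Rightarrow> 'a) \<Rightarrow> 'a \<Rightarrow> bool" where
  "cycle_state A s \<longleftrightarrow> (\<exists>m>0. (A ^^ m) s = s)"

definition fds_prod :: "('a \<Rightarrow> 'a) \<Rightarrow> ('b \<Rightarrow> 'b) \<Rightarrow> ('a \<times> 'b \<Rightarrow> 'a \<times> 'b)" where
  "fds_prod A B = (\<lambda>(a, b). (A a, B b))"

type_synonym 'v forest = "'v set \<times> ('v \<times> 'v) set"

definition verts :: "'v forest \<Rightarrow> 'v set" where "verts F = fst F"
definition arcs :: "'v forest \<Rightarrow> ('v \<times> 'v) set" where "arcs F = snd F"

definition is_root :: "'v forest \<Rightarrow> 'v \<Rightarrow> bool" where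
  "is_root F r \<longleftrightarrow> r \<in> verts F \<and> (\<forall>y. (r, y) \<notin> arcs F)"

definition depth :: "'v forest \<Rightarrow> 'v \<Rightarrow> nat" where
  "depth F x = (LEAST n. \<exists>r. is_root F r \<and> (x, r) \<in> arcs F ^^ n)"

definition unrolling :: "('a \<Rightarrow> 'a) \<Rightarrow> ('a \<times> nat) forest" where
  "unrolling A =
     (let V = {(s, k). cycle_state A ((A ^^ k) s)}
      in (V, {((s, k), (A s, k - 1)) | s k. (s, k) \<in> V \<and> k \<ge> 1}))"

definition forest_prod :: "'v forest \<Rightarrow> 'w forest \<Rightarrow> ('v \<times> 'w) forest" where
  "forest_prod F G =
     (let V = {(x, y). x \<in> verts F \<and> y \<in> verts G \<and> depth F x = depth G y}
      in (V, {((x, y), (x', y')) | x y x' y'.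
                (x, y) \<in> V \<and> (x', y') \<in> V \<and> (x, x') \<in> arcs F \<and> (y, y') \<in> arcs G}))"

definition forest_iso :: "'v forest \<Rightarrow> 'w forest \<Rightarrow> bool" where
  "forest_iso F G \<longleftrightarrow> (\<exists>f. bij_betw f (verts F) (verts G) \<and>
      (\<forall>x\<in>verts F. \<forall>y\<in>verts F. (x, y) \<in> arcs F \<longleftrightarrow> (f x, f y) \<in> arcs G))"

end

theory Submission
  imports Defs
begin

text \<open>In the unrolling of \<open>A\<close> the unique path from a vertex \<open>(s, k)\<close> has length \<open>k\<close> and ends
  at the root \<open>(A\<^sup>k s, 0)\<close>, so \<open>(s, k)\<close> has depth \<open>k\<close>. Hence the product of two unrollings
  pairs \<open>(s, k)\<close> with \<open>(t, k)\<close>, and \<open>((s, k), (t, k)) \<mapsto> ((s, t), k)\<close> is an isomorphism onto the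
  unrolling of \<open>AB\<close>, because \<open>(s, t)\<close> is a cycle state of \<open>AB\<close> exactly when \<open>s\<close> and \<open>t\<close> are
  cycle states (iterate both for the product of their periods).\<close>

lemma mem_verts_unrolling [simp]:
  "(s, k) \<in> verts (unrolling A) \<longleftrightarrow> cycle_state A ((A ^^ k) s)"
  by (simp add: unrolling_def verts_def Let_def)

lemma mem_arcs_unrolling [simp]:
  "((s, k), y) \<in> arcs (unrolling A) \<longleftrightarrow>
     cycle_state A ((A ^^ k) s) \<and> k \<ge> 1 \<and> y = (A s, k - 1)"
  by (auto simp add: unrolling_def arcs_def Let_def)

lemma relpow_arcs_unrolling:
  assumes "cycle_state A ((A ^^ k) s)"
  shows "((s, k), y) \<in> arcs (unrolling A) ^^ n \<longleftrightarrow> n \<le> k \<and> y = ((A ^^ n) s, k - n)"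
  using assms
proof (induction n arbitrary: s k)
  case 0
  then show ?case by auto
next
  case (Suc n)
  have "((s, k), y) \<in> arcs (unrolling A) ^^ Suc n \<longleftrightarrow>
      (\<exists>z. ((s, k), z) \<in> arcs (unrolling A) \<and> (z, y) \<in> arcs (unrolling A) ^^ n)"
    by (blast intro: relpow_Suc_I2 dest: relpow_Suc_D2)
  also have "\<dots> \<longleftrightarrow> k \<ge> 1 \<and> ((A s, k - 1), y) \<in> arcs (unrolling A) ^^ n"
    using Suc.prems by simp
  also have "\<dots> \<longleftrightarrow> k \<ge> 1 \<and> n \<le> k - 1 \<and> y = ((A ^^ n) (A s), k - 1 - n)"
  proof (cases "k \<ge> 1")
    case True
    then obtain j where "k = Suc j"
      by (cases k) auto
    with Suc.prems show ?thesis
      by (simp add: Suc.IH funpow_swap1)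
  qed simp
  also have "\<dots> \<longleftrightarrow> Suc n \<le> k \<and> y = ((A ^^ Suc n) s, k - Suc n)"
    by (auto simp add: funpow_swap1)
  finally show ?case .
qed

lemma is_root_unrolling:
  "is_root (unrolling A) (s, k) \<longleftrightarrow> cycle_state A ((A ^^ k) s) \<and> k = 0"
  by (auto simp add: is_root_def)

lemma depth_unrolling:
  assumes "cycle_state A ((A ^^ k) s)"
  shows "depth (unrolling A) (s, k) = k"
  unfolding depth_def
proof (rule Least_equality)
  show "\<exists>r. is_root (unrolling A) r \<and> ((s, k), r) \<in> arcs (unrolling A) ^^ k"
    using assms by (auto simp add: is_root_unrolling relpow_arcs_unrolling)
next
  fix n
  assume "\<exists>r. is_root (unrolling A) r \<and> ((s, k), r) \<in> arcs (unrolling A) ^^ n"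
  then show "k \<le> n"
    using assms by (auto simp add: is_root_unrolling relpow_arcs_unrolling)
qed

lemma fds_prod_apply [simp]: "fds_prod A B (s, t) = (A s, B t)"
  by (simp add: fds_prod_def)

lemma funpow_fds_prod [simp]: "(fds_prod A B ^^ k) (s, t) = ((A ^^ k) s, (B ^^ k) t)"
  by (induction k) simp_all

lemma cycle_state_fds_prod [simp]:
  "cycle_state (fds_prod A B) (s, t) \<longleftrightarrow> cycle_state A s \<and> cycle_state B t"
proof
  assume "cycle_state A s \<and> cycle_state B t"
  then obtain m n where "m > 0" "(A ^^ m) s = s" "n > 0" "(B ^^ n) t = t"
    unfolding cycle_state_def by blast
  then have "(A ^^ (m * n)) s = s" "(B ^^ (m * n)) t = t"
    using funpow_mod_eq[where f = A and n = m and x = s and m = "m * n"]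
      funpow_mod_eq[where f = B and n = n and x = t and m = "m * n"] by simp_all
  moreover have "m * n > 0"
    using \<open>m > 0\<close> \<open>n > 0\<close> by simp
  ultimately show "cycle_state (fds_prod A B) (s, t)"
    unfolding cycle_state_def by (metis funpow_fds_prod)
qed (auto simp add: cycle_state_def)

lemma mem_verts_forest_prod:
  "(x, y) \<in> verts (forest_prod F G) \<longleftrightarrow> x \<in> verts F \<and> y \<in> verts G \<and> depth F x = depth G y"
  by (simp add: forest_prod_def verts_def Let_def)

lemma mem_arcs_forest_prod [simp]:
  "((x, y), (x', y')) \<in> arcs (forest_prod F G) \<longleftrightarrow>
     (x, y) \<in> verts (forest_prod F G) \<and> (x', y') \<in> verts (forest_prod F G) \<and>
     (x, x') \<in> arcs F \<and> (y, y') \<in> arcs G"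
  by (simp add: forest_prod_def arcs_def verts_def Let_def)

lemma mem_verts_forest_prod_unrolling [simp]:
  "((s, k), (t, j)) \<in> verts (forest_prod (unrolling A) (unrolling B)) \<longleftrightarrow>
     cycle_state A ((A ^^ k) s) \<and> cycle_state B ((B ^^ j) t) \<and> k = j"
  by (auto simp add: mem_verts_forest_prod depth_unrolling)

lemma forest_iso_forest_prod_unrolling:
  fixes A :: "'a \<Rightarrow> 'a" and B :: "'b \<Rightarrow> 'b"
  shows "forest_iso (forest_prod (unrolling A) (unrolling B)) (unrolling (fds_prod A B))"
proof -
  define f :: "('a \<times> nat) \<times> ('b \<times> nat) \<Rightarrow> ('a \<times> 'b) \<times> nat"
    where "f = (\<lambda>((s, k), (t, _)). ((s, t), k))"
  define g :: "('a \<times> 'b) \<times> nat \<Rightarrow> ('a \<times> nat) \<times> ('b \<times> nat)"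
    where "g = (\<lambda>((s, t), k). ((s, k), (t, k)))"
  have "bij_betw f (verts (forest_prod (unrolling A) (unrolling B))) (verts (unrolling (fds_prod A B)))"
    by (rule bij_betw_byWitness[where f' = g]) (auto simp add: f_def g_def)
  moreover have "(x, y) \<in> arcs (forest_prod (unrolling A) (unrolling B)) \<longleftrightarrow>
      (f x, f y) \<in> arcs (unrolling (fds_prod A B))"
    if "x \<in> verts (forest_prod (unrolling A) (unrolling B))"
      and "y \<in> verts (forest_prod (unrolling A) (unrolling B))" for x y
  proof -
    obtain s k t j s' k' t' j' where "x = ((s, k), (t, j))" "y = ((s', k'), (t', j'))"
      by (metis prod.exhaust)
    with that show ?thesis by (auto simp add: f_def)
  qed
  ultimately show ?thesis
    unfolding forest_iso_def by blast
qed

theorem mainTheorem14: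
  fixes A :: "'a::finite \<Rightarrow> 'a" and B :: "'b::finite \<Rightarrow> 'b"
  shows "forest_iso (forest_prod (unrolling A) (unrolling B)) (unrolling (fds_prod A B))"
  by (rule forest_iso_forest_prod_unrolling)

end
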